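(* For integers $r\ge0$ and $k\ge 1$ let $\mathcal{N}(r;k)$ be the number of proper complete $(r-1,k)$-graphs on the vertex set $\{1,\dots,k\}$, and set $\mathcal{N}(r;0)=1$ for all $r\ge0$. Then $\mathcal{N}(0;k)=1$ for all $k$, and for $r,k\ge1$ \[\mathcal{N}(r;k)=\frac12\sum_{a=0}^{k}\binom{k}{a}\mathcal{N}(r-1;a)\mathcal{N}(r-1;k-a).\] Equivalently the formal series $E(X;r)=\sum_{k\ge0}\mathcal{N}(r;k)X^k/k!$ satisfy $E(X;0)=e^X$ and $E(X;r)=\tfrac12\big(1+E(X;r-1)^2\big)$ for $r\ge1$. Consequently there are real numbers $\nu(r;m)\ge0$ ($0\le m\le 2^r$) with $\sum_m\nu(r;m)=1$ such that $\mathcal{N}(r;k)=\sum_{m=0}^{2^r}\nu(r;m)m^k$ for all $k\ge 0$ (with $0^0=1$), and $\nu(r;0)=1-\mu_r$.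
   Context: A $(D,k)$-graph is a weighted graph on $k$ vertices in which each edge $ij$ carries an integer weight $d(i,j)\in[-1,D]$; it is complete if every pair of distinct vertices is joined by an edge. A complete $(D,k)$-graph is proper if for all distinct vertices $a,b,c$ with $d(a,b)\le d(a,c)\le d(b,c)$ one has either $d(a,b)=d(a,c)=d(b,c)=-1$, or $d(a,b)<d(a,c)=d(b,c)$. (A graph on one vertex has no edges and counts as proper complete.) The constants $\mu_r$ are defined by $\mu_0=1$, $\mu_{r+1}=\mu_r-\tfrac12\mu_r^2$. *)

theory Defs
  imports Complex_Main "HOL-Computational_Algebra.Formal_Power_Series"
begin

text \<open>Complete (D,k)-graphs on vertex set {1..k}: symmetric weight function
  with integer weights in [-1,D] on pairs of distinct vertices; the value is
  normalised to 0 outside the edge set so that the set of graphs is finite.\<close>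
definition complete_graphs :: "int \<Rightarrow> nat \<Rightarrow> (nat \<Rightarrow> nat \<Rightarrow> int) set" where
  "complete_graphs D k =
     {d. (\<forall>i j. d i j = d j i)
       \<and> (\<forall>i\<in>{1..k}. \<forall>j\<in>{1..k}. i \<noteq> j \<longrightarrow> -1 \<le> d i j \<and> d i j \<le> D)
       \<and> (\<forall>i j. \<not> (i \<in> {1..k} \<and> j \<in> {1..k} \<and> i \<noteq> j) \<longrightarrow> d i j = 0)}"

definition proper :: "nat \<Rightarrow> (nat \<Rightarrow> nat \<Rightarrow> int) \<Rightarrow> bool" where
  "proper k d \<longleftrightarrow>
     (\<forall>a\<in>{1..k}. \<forall>b\<in>{1..k}. \<forall>c\<in>{1..k}.
        a \<noteq> b \<and> a \<noteq> c \<and> b \<noteq> c \<and> d a b \<le> d a c \<and> d a c \<le> d b c \<longrightarrow>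
          (d a b = -1 \<and> d a c = -1 \<and> d b c = -1) \<or> (d a b < d a c \<and> d a c = d b c))"

definition NN :: "nat \<Rightarrow> nat \<Rightarrow> nat" where
  "NN r k = (if k = 0 then 1
             else card {d \<in> complete_graphs (int r - 1) k. proper k d})"

fun mu :: "nat \<Rightarrow> real" where
  "mu 0 = 1"
| "mu (Suc r) = mu r - (1/2) * (mu r)^2"

definition EGF :: "nat \<Rightarrow> real fps" where
  "EGF r = Abs_fps (\<lambda>k. real (NN r k) / fact k)"

end

theory Submission
  imports Defs
begin

text \<open>In a proper complete graph with weights at most \<open>D \<ge> 0\<close> the weights behave like an
  ultrametric: on any triangle the largest weight is attained twice (or all weights are \<open>-1\<close>).
  Hence the vertices split into at most two classes, joined by edges of weight exactly \<open>D\<close>,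
  with weights \<open>< D\<close> inside each class, and each class carries a proper graph with weights at
  most \<open>D - 1\<close>. Conversely two such graphs on complementary vertex sets glue to a proper graph.
  Counting ordered pairs of complementary vertex sets counts every graph twice, which gives the
  recurrence, i.e. the coefficientwise form of \<open>E(X;r) = (1 + E(X;r-1)\<^sup>2)/2\<close>.
  If \<open>N(r-1;-)\<close> is the moment sequence of a measure \<open>\<nu>\<close>, the recurrence says that \<open>N(r;-)\<close> is
  the moment sequence of \<open>(\<delta>\<^sub>0 + \<nu> * \<nu>)/2\<close>, where \<open>\<nu> * \<nu>\<close> is the law of the sum of two
  independent \<open>\<nu>\<close>-distributed variables; its mass at \<open>0\<close> obeys the recursion of \<open>1 - \<mu>\<^sub>r\<close>.\<close>

type_synonym weighting = "nat \<Rightarrow> nat \<Rightarrow> int"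

text \<open>Proper complete graphs on an arbitrary vertex set \<open>S\<close> rather than \<open>{1..k}\<close>, since the
  classes of a split are arbitrary sets of vertices.\<close>

definition proper_on :: "nat set \<Rightarrow> weighting \<Rightarrow> bool" where
  "proper_on S d \<longleftrightarrow>
     (\<forall>a\<in>S. \<forall>b\<in>S. \<forall>c\<in>S. a \<noteq> b \<and> a \<noteq> c \<and> b \<noteq> c \<and> d a b \<le> d a c \<and> d a c \<le> d b c \<longrightarrow>
        (d a b = -1 \<and> d a c = -1 \<and> d b c = -1) \<or> (d a b < d a c \<and> d a c = d b c))"

definition proper_graphs :: "int \<Rightarrow> nat set \<Rightarrow> weighting set" where
  "proper_graphs D S =
     {d. (\<forall>i j. d i j = d j i)
       \<and> (\<forall>i\<in>S. \<forall>j\<in>S. i \<noteq> j \<longrightarrow> -1 \<le> d i j \<and> d i j \<le> D)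
       \<and> (\<forall>i j. \<not> (i \<in> S \<and> j \<in> S \<and> i \<noteq> j) \<longrightarrow> d i j = 0)
       \<and> proper_on S d}"

lemma proper_onD:
  "proper_on S d \<Longrightarrow> a \<in> S \<Longrightarrow> b \<in> S \<Longrightarrow> c \<in> S \<Longrightarrow> a \<noteq> b \<Longrightarrow> a \<noteq> c \<Longrightarrow> b \<noteq> c \<Longrightarrow>
    d a b \<le> d a c \<Longrightarrow> d a c \<le> d b c \<Longrightarrow>
    (d a b = -1 \<and> d a c = -1 \<and> d b c = -1) \<or> (d a b < d a c \<and> d a c = d b c)"
  unfolding proper_on_def by blast

lemma proper_graphsI:
  assumes "\<And>i j. d i j = d j i"
    and "\<And>i j. i \<in> S \<Longrightarrow> j \<in> S \<Longrightarrow> i \<noteq> j \<Longrightarrow> -1 \<le> d i j \<and> d i j \<le> D"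
    and "\<And>i j. \<not> (i \<in> S \<and> j \<in> S \<and> i \<noteq> j) \<Longrightarrow> d i j = 0"
    and "proper_on S d"
  shows "d \<in> proper_graphs D S"
  using assms unfolding proper_graphs_def by blast

lemma
  assumes "d \<in> proper_graphs D S"
  shows proper_graphs_sym: "d i j = d j i"
    and proper_graphs_bounds: "i \<in> S \<Longrightarrow> j \<in> S \<Longrightarrow> i \<noteq> j \<Longrightarrow> -1 \<le> d i j \<and> d i j \<le> D"
    and proper_graphs_zero: "\<not> (i \<in> S \<and> j \<in> S \<and> i \<noteq> j) \<Longrightarrow> d i j = 0"
    and proper_graphs_proper_on: "proper_on S d"
  using assms unfolding proper_graphs_def by auto

lemma proper_graphs_eqI:
  assumes "d \<in> proper_graphs D S" "e \<in> proper_graphs D' S"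
    and "\<And>i j. i \<in> S \<Longrightarrow> j \<in> S \<Longrightarrow> d i j = e i j"
  shows "d = e"
proof (intro ext)
  fix i j
  show "d i j = e i j"
    using assms proper_graphs_zero[OF assms(1), of i j] proper_graphs_zero[OF assms(2), of i j]
    by (cases "i \<in> S \<and> j \<in> S") auto
qed

lemma NN_eq_card_proper_graphs: "NN r k = card (proper_graphs (int r - 1) {1..k})"
proof (cases "k = 0")
  case True
  have "proper_graphs D {} = {\<lambda>_ _. 0}" for D
    by (auto simp: proper_graphs_def proper_on_def fun_eq_iff)
  with True show ?thesis by (simp add: NN_def)
next
  case False
  have "{d \<in> complete_graphs (int r - 1) k. proper k d} = proper_graphs (int r - 1) {1..k}"
    by (auto simp: proper_graphs_def proper_on_def complete_graphs_def proper_def)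
  with False show ?thesis by (simp add: NN_def)
qed

lemma finite_proper_graphs:
  assumes "finite S"
  shows "finite (proper_graphs D S)"
proof -
  let ?table = "\<lambda>d. restrict (\<lambda>(i, j). d i j) (S \<times> S)"
  have "inj_on ?table (proper_graphs D S)"
  proof (rule inj_onI)
    fix d e assume d: "d \<in> proper_graphs D S" and e: "e \<in> proper_graphs D S"
      and eq: "?table d = ?table e"
    show "d = e"
    proof (rule proper_graphs_eqI[OF d e])
      fix i j assume "i \<in> S" "j \<in> S"
      then show "d i j = e i j" using fun_cong[OF eq, of "(i, j)"] by simp
    qed
  qed
  moreover have "?table ` proper_graphs D S \<subseteq> PiE (S \<times> S) (\<lambda>_. {-1..max D 0})"
    by (force simp: proper_graphs_def)
  moreover have "finite (PiE (S \<times> S) (\<lambda>_. {-1..max D 0}))"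
    using assms by (intro finite_PiE) auto
  ultimately show ?thesis
    using inj_on_finite by blast
qed

lemma proper_graph_ultrametric:
  assumes d: "d \<in> proper_graphs D S"
    and S: "a \<in> S" "b \<in> S" "c \<in> S" and distinct: "a \<noteq> b" "a \<noteq> c" "b \<noteq> c"
  shows "d a b \<le> max (d a c) (d b c)"
    and "d a b = d a c \<Longrightarrow> d a c = d b c \<Longrightarrow> d a b = -1"
proof -
  have sym: "d b a = d a b" "d c a = d a c" "d c b = d b c"
    using proper_graphs_sym[OF d] by auto
  note P = proper_onD[OF proper_graphs_proper_on[OF d]]
  note P6 = P[of a b c] P[of a c b] P[of b a c] P[of b c a] P[of c a b] P[of c b a]
  show "d a b \<le> max (d a c) (d b c)"
    using P6 S distinct unfolding sym by (smt (verit))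
  show "d a b = d a c \<Longrightarrow> d a c = d b c \<Longrightarrow> d a b = -1"
    using P6 S distinct unfolding sym by (smt (verit))
qed

definition join_graphs :: "int \<Rightarrow> nat set \<Rightarrow> nat set \<Rightarrow> weighting \<Rightarrow> weighting \<Rightarrow> weighting" where
  "join_graphs D S A d1 d2 = (\<lambda>i j.
     if i \<in> A \<and> j \<in> A then d1 i j
     else if i \<in> S - A \<and> j \<in> S - A then d2 i j
     else if i \<in> S \<and> j \<in> S then D else 0)"

definition restrict_graph :: "nat set \<Rightarrow> weighting \<Rightarrow> weighting" where
  "restrict_graph A d = (\<lambda>i j. if i \<in> A \<and> j \<in> A then d i j else 0)"

lemma join_graphs_in_proper_graphs:
  assumes D: "0 \<le> D" and A: "A \<subseteq> S"
    and d1: "d1 \<in> proper_graphs (D - 1) A" and d2: "d2 \<in> proper_graphs (D - 1) (S - A)"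
  shows "join_graphs D S A d1 d2 \<in> proper_graphs D S"
proof -
  let ?g = "join_graphs D S A d1 d2"
  have inside: "?g x y = d1 x y" if "x \<in> A" "y \<in> A" for x y
    using that by (simp add: join_graphs_def)
  have outside: "?g x y = d2 x y" if "x \<in> S - A" "y \<in> S - A" for x y
    using that by (auto simp: join_graphs_def)
  have across: "?g x y = D" if "x \<in> S" "y \<in> S" "x \<in> A \<longleftrightarrow> y \<notin> A" for x y
    using that by (auto simp: join_graphs_def)
  have below: "?g x y \<le> D - 1" if "x \<in> S" "y \<in> S" "x \<noteq> y" "x \<in> A \<longleftrightarrow> y \<in> A" for x y
    using that inside outside proper_graphs_bounds[OF d1, of x y] proper_graphs_bounds[OF d2, of x y]
    by (cases "x \<in> A") auto
  show ?thesis
  proof (rule proper_graphsI)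
    show "?g i j = ?g j i" for i j
      using proper_graphs_sym[OF d1] proper_graphs_sym[OF d2] by (auto simp: join_graphs_def)
    show "-1 \<le> ?g i j \<and> ?g i j \<le> D" if "i \<in> S" "j \<in> S" "i \<noteq> j" for i j
      using that D inside outside across proper_graphs_bounds[OF d1, of i j]
        proper_graphs_bounds[OF d2, of i j]
      by (cases "i \<in> A"; cases "j \<in> A") auto
    show "?g i j = 0" if "\<not> (i \<in> S \<and> j \<in> S \<and> i \<noteq> j)" for i j
      using that A proper_graphs_zero[OF d1, of i j] proper_graphs_zero[OF d2, of i j]
      by (auto simp: join_graphs_def)
    show "proper_on S ?g"
      unfolding proper_on_def
    proof (intro ballI impI)
      fix a b c assume abc: "a \<in> S" "b \<in> S" "c \<in> S"
        and h: "a \<noteq> b \<and> a \<noteq> c \<and> b \<noteq> c \<and> ?g a b \<le> ?g a c \<and> ?g a c \<le> ?g b c"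
      consider "a \<in> A" "b \<in> A" "c \<in> A" | "a \<notin> A" "b \<notin> A" "c \<notin> A"
        | "\<not> (a \<in> A \<and> b \<in> A \<and> c \<in> A)" "\<not> (a \<notin> A \<and> b \<notin> A \<and> c \<notin> A)"
        by blast
      then show "(?g a b = -1 \<and> ?g a c = -1 \<and> ?g b c = -1) \<or> (?g a b < ?g a c \<and> ?g a c = ?g b c)"
      proof cases
        case 1
        then show ?thesis
          using h inside proper_onD[OF proper_graphs_proper_on[OF d1], of a b c] by auto
      next
        case 2
        then show ?thesis
          using h abc outside proper_onD[OF proper_graphs_proper_on[OF d2], of a b c] by auto
      next
        case 3
        \<comment> \<open>two of the vertices lie on one side: the edge between them is the strictly smallest\<close>
        then show ?thesis
          using h abc across below[of a b] below[of a c] below[of b c]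
          by (cases "a \<in> A"; cases "b \<in> A"; cases "c \<in> A") auto
      qed
    qed
  qed
qed

lemma restrict_graph_in_proper_graphs:
  assumes d: "d \<in> proper_graphs D S" and A: "A \<subseteq> S"
    and less: "\<And>i j. i \<in> A \<Longrightarrow> j \<in> A \<Longrightarrow> i \<noteq> j \<Longrightarrow> d i j < D"
  shows "restrict_graph A d \<in> proper_graphs (D - 1) A"
proof (rule proper_graphsI)
  show "restrict_graph A d i j = restrict_graph A d j i" for i j
    using proper_graphs_sym[OF d] by (auto simp: restrict_graph_def)
  show "-1 \<le> restrict_graph A d i j \<and> restrict_graph A d i j \<le> D - 1"
    if "i \<in> A" "j \<in> A" "i \<noteq> j" for i j
    using that proper_graphs_bounds[OF d, of i j] less[of i j] A by (auto simp: restrict_graph_def)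
  show "restrict_graph A d i j = 0" if "\<not> (i \<in> A \<and> j \<in> A \<and> i \<noteq> j)" for i j
    using that proper_graphs_zero[OF d, of i i] by (auto simp: restrict_graph_def)
  show "proper_on A (restrict_graph A d)"
    using proper_graphs_proper_on[OF d] A
    unfolding proper_on_def restrict_graph_def by (simp add: subset_iff)
qed

lemma restrict_join_graphs_left:
  "d1 \<in> proper_graphs D' A \<Longrightarrow> restrict_graph A (join_graphs D S A d1 d2) = d1"
  using proper_graphs_zero by (fastforce simp: fun_eq_iff restrict_graph_def join_graphs_def)

lemma restrict_join_graphs_right:
  "d2 \<in> proper_graphs D' (S - A) \<Longrightarrow> restrict_graph (S - A) (join_graphs D S A d1 d2) = d2"
  using proper_graphs_zero by (fastforce simp: fun_eq_iff restrict_graph_def join_graphs_def)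

lemma join_graphs_less_iff:
  assumes A: "A \<subseteq> S" and d1: "d1 \<in> proper_graphs (D - 1) A"
    and d2: "d2 \<in> proper_graphs (D - 1) (S - A)"
    and j: "j \<in> S" "j \<noteq> s\<^sub>0" and s\<^sub>0: "s\<^sub>0 \<in> S"
  shows "j \<in> A \<longleftrightarrow> (s\<^sub>0 \<in> A \<longleftrightarrow> join_graphs D S A d1 d2 s\<^sub>0 j < D)"
  using proper_graphs_bounds[OF d1, of s\<^sub>0 j] proper_graphs_bounds[OF d2, of s\<^sub>0 j] j s\<^sub>0 A
  by (cases "j \<in> A"; cases "s\<^sub>0 \<in> A") (auto simp: join_graphs_def)

lemma join_graphs_inject:
  assumes s\<^sub>0: "s\<^sub>0 \<in> S" and same_side: "s\<^sub>0 \<in> A \<longleftrightarrow> s\<^sub>0 \<in> B"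
    and A: "A \<subseteq> S" "d1 \<in> proper_graphs (D - 1) A" "d2 \<in> proper_graphs (D - 1) (S - A)"
    and B: "B \<subseteq> S" "e1 \<in> proper_graphs (D - 1) B" "e2 \<in> proper_graphs (D - 1) (S - B)"
    and eq: "join_graphs D S A d1 d2 = join_graphs D S B e1 e2"
  shows "A = B \<and> d1 = e1 \<and> d2 = e2"
proof -
  have "j \<in> A \<longleftrightarrow> j \<in> B" for j
  proof (cases "j \<in> S \<and> j \<noteq> s\<^sub>0")
    case True
    then show ?thesis
      using join_graphs_less_iff[OF A, of j s\<^sub>0] join_graphs_less_iff[OF B, of j s\<^sub>0] s\<^sub>0 eq same_side
      by simp
  next
    case False
    then show ?thesis using same_side A(1) B(1) by auto
  qed
  then have "A = B" by blast
  then show ?thesis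
    using restrict_join_graphs_left[OF A(2), of D S d2] restrict_join_graphs_left[OF B(2), of D S e2]
      restrict_join_graphs_right[OF A(3), of D d1] restrict_join_graphs_right[OF B(3), of D e1] eq
    by simp
qed

lemma proper_graph_classes:
  assumes d: "d \<in> proper_graphs D S" and D: "0 \<le> D" and s\<^sub>0: "s\<^sub>0 \<in> S"
    and C: "C = {j \<in> S. j = s\<^sub>0 \<or> d s\<^sub>0 j < D}"
    and ij: "i \<in> S" "j \<in> S" "i \<noteq> j"
  shows "i \<in> C \<longleftrightarrow> j \<in> C \<Longrightarrow> d i j < D"
    and "\<not> (i \<in> C \<longleftrightarrow> j \<in> C) \<Longrightarrow> d i j = D"
proof -
  note sym = proper_graphs_sym[OF d] and bounds = proper_graphs_bounds[OF d]
  note ultra = proper_graph_ultrametric[OF d]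
  have inside: "d s\<^sub>0 x < D" if "x \<in> C" "x \<noteq> s\<^sub>0" for x
    using that C by auto
  have outside: "x \<noteq> s\<^sub>0 \<and> d s\<^sub>0 x = D" if "x \<in> S" "x \<notin> C" for x
    using that C bounds[of s\<^sub>0 x] s\<^sub>0 by force
  have across: "d x y = D" if "x \<in> C" "y \<in> S" "y \<notin> C" for x y
  proof (cases "x = s\<^sub>0")
    case False
    have "x \<in> S" using \<open>x \<in> C\<close> C by simp
    with that False have "d s\<^sub>0 y \<le> max (d s\<^sub>0 x) (d y x)"
      using ultra(1)[of s\<^sub>0 y x] outside[of y] s\<^sub>0 by auto
    with that False have "D \<le> d x y"
      using inside[of x] outside[of y] sym[of x y] by (auto simp: max_def split: if_splits)
    with that \<open>x \<in> S\<close> show ?thesis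
      using bounds[of x y] by force
  qed (use that outside in auto)
  show "d i j < D" if "i \<in> C \<longleftrightarrow> j \<in> C"
  proof (cases "i \<in> C")
    case True
    show ?thesis
    proof (cases "i = s\<^sub>0 \<or> j = s\<^sub>0")
      case True
      with \<open>i \<in> C\<close> that ij show ?thesis using inside sym by auto
    next
      case False
      then have "d i j \<le> max (d i s\<^sub>0) (d j s\<^sub>0)"
        using ultra(1)[of i j s\<^sub>0] ij s\<^sub>0 by auto
      with False \<open>i \<in> C\<close> that show ?thesis
        using inside[of i] inside[of j] sym by (simp add: max_def split: if_splits)
    qed
  next
    case False
    with that ij have "d s\<^sub>0 i = D" "d s\<^sub>0 j = D" "i \<noteq> s\<^sub>0" "j \<noteq> s\<^sub>0"
      using outside by auto
    \<comment> \<open>a triangle with three weights \<open>D \<ge> 0\<close> is not proper\<close>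
    moreover have "d i j \<noteq> D"
      using ultra(2)[of i j s\<^sub>0] ij s\<^sub>0 sym D calculation by auto
    ultimately show ?thesis
      using bounds[of i j] ij by simp
  qed
  show "d i j = D" if "\<not> (i \<in> C \<longleftrightarrow> j \<in> C)"
    using that across[of i j] across[of j i] ij sym[of i j] by auto
qed

lemma proper_graph_decompose:
  assumes d: "d \<in> proper_graphs D S" and D: "0 \<le> D" and s\<^sub>0: "s\<^sub>0 \<in> S"
  obtains A where "A \<subseteq> S" "s\<^sub>0 \<in> A \<longleftrightarrow> b"
    and "restrict_graph A d \<in> proper_graphs (D - 1) A"
    and "restrict_graph (S - A) d \<in> proper_graphs (D - 1) (S - A)"
    and "join_graphs D S A (restrict_graph A d) (restrict_graph (S - A) d) = d"
proof -
  define C where "C = {j \<in> S. j = s\<^sub>0 \<or> d s\<^sub>0 j < D}"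
  define A where "A = (if b then C else S - C)"
  have A: "A \<subseteq> S" and s\<^sub>0_A: "s\<^sub>0 \<in> A \<longleftrightarrow> b"
    using s\<^sub>0 by (auto simp: A_def C_def)
  have side: "(i \<in> A \<longleftrightarrow> j \<in> A) \<longleftrightarrow> (i \<in> C \<longleftrightarrow> j \<in> C)" if "i \<in> S" "j \<in> S" for i j
    using that by (auto simp: A_def)
  have less: "d i j < D" if "i \<in> S" "j \<in> S" "i \<noteq> j" "i \<in> A \<longleftrightarrow> j \<in> A" for i j
    using proper_graph_classes(1)[OF d D s\<^sub>0 C_def, of i j] that side by auto
  have top: "d i j = D" if "i \<in> S" "j \<in> S" "i \<noteq> j" "\<not> (i \<in> A \<longleftrightarrow> j \<in> A)" for i j
    using proper_graph_classes(2)[OF d D s\<^sub>0 C_def, of i j] that side by auto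
  have left: "restrict_graph A d \<in> proper_graphs (D - 1) A"
    by (rule restrict_graph_in_proper_graphs[OF d A]) (use less A in auto)
  have right: "restrict_graph (S - A) d \<in> proper_graphs (D - 1) (S - A)"
    by (rule restrict_graph_in_proper_graphs[OF d]) (use less in auto)
  have "join_graphs D S A (restrict_graph A d) (restrict_graph (S - A) d) = d"
  proof (rule proper_graphs_eqI[OF join_graphs_in_proper_graphs[OF D A left right] d])
    fix i j assume "i \<in> S" "j \<in> S"
    then show "join_graphs D S A (restrict_graph A d) (restrict_graph (S - A) d) i j = d i j"
      using top[of i j] by (auto simp: join_graphs_def restrict_graph_def)
  qed
  with A s\<^sub>0_A left right that show ?thesis by blast
qed

text \<open>The extra factor \<open>2\<close> records on which side of the split the vertex \<open>s\<^sub>0\<close> lies.\<close>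

lemma card_proper_graphs_split:
  assumes S: "finite S" "s\<^sub>0 \<in> S" and D: "0 \<le> D"
  shows "(\<Sum>A\<in>Pow S. card (proper_graphs (D - 1) A) * card (proper_graphs (D - 1) (S - A)))
           = 2 * card (proper_graphs D S)"
proof -
  define T where "T = (SIGMA A:Pow S. proper_graphs (D - 1) A \<times> proper_graphs (D - 1) (S - A))"
  define f where "f = (\<lambda>(A, d1, d2). (join_graphs D S A d1 d2, s\<^sub>0 \<in> A))"
  have "bij_betw f T (proper_graphs D S \<times> UNIV)"
  proof (rule bij_betw_imageI)
    show "inj_on f T"
    proof (rule inj_onI)
      fix x y assume "x \<in> T" "y \<in> T" "f x = f y"
      moreover obtain A d1 d2 B e1 e2 where "x = (A, d1, d2)" "y = (B, e1, e2)"
        by (cases x; cases y) auto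
      ultimately show "x = y"
        using join_graphs_inject[OF S(2), of A B d1 D d2 e1 e2] by (auto simp: T_def f_def)
    qed
    show "f ` T = proper_graphs D S \<times> UNIV"
    proof
      show "f ` T \<subseteq> proper_graphs D S \<times> UNIV"
        using join_graphs_in_proper_graphs[OF D] by (auto simp: f_def T_def)
      show "proper_graphs D S \<times> UNIV \<subseteq> f ` T"
      proof clarify
        fix d b assume "d \<in> proper_graphs D S"
        then obtain A where "A \<subseteq> S" "s\<^sub>0 \<in> A \<longleftrightarrow> b"
          and "restrict_graph A d \<in> proper_graphs (D - 1) A"
          and "restrict_graph (S - A) d \<in> proper_graphs (D - 1) (S - A)"
          and "join_graphs D S A (restrict_graph A d) (restrict_graph (S - A) d) = d"
          using proper_graph_decompose D S(2) by metis
        then show "(d, b) \<in> f ` T"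
          by (auto simp: T_def f_def intro!: image_eqI[of _ _ "(A, restrict_graph A d, restrict_graph (S - A) d)"])
      qed
    qed
  qed
  then have "card T = card (proper_graphs D S \<times> (UNIV :: bool set))"
    by (rule bij_betw_same_card)
  moreover have "card T = (\<Sum>A\<in>Pow S. card (proper_graphs (D - 1) A) * card (proper_graphs (D - 1) (S - A)))"
    unfolding T_def using S
    by (subst card_SigmaI) (auto simp: card_cartesian_product intro!: finite_proper_graphs intro: finite_subset)
  ultimately show ?thesis
    by (simp add: card_cartesian_product)
qed

definition relabel_graph :: "(nat \<Rightarrow> nat) \<Rightarrow> nat set \<Rightarrow> weighting \<Rightarrow> weighting" where
  "relabel_graph h S' d = (\<lambda>i j. if i \<in> S' \<and> j \<in> S' then d (h i) (h j) else 0)"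

lemma relabel_graph_in_proper_graphs:
  assumes h: "inj_on h S'" "h ` S' \<subseteq> S" and d: "d \<in> proper_graphs D S"
  shows "relabel_graph h S' d \<in> proper_graphs D S'"
proof (rule proper_graphsI)
  have h_mem: "h i \<in> S" if "i \<in> S'" for i
    using h that by blast
  have h_inj: "h i \<noteq> h j" if "i \<in> S'" "j \<in> S'" "i \<noteq> j" for i j
    using h that by (auto dest: inj_onD)
  show "relabel_graph h S' d i j = relabel_graph h S' d j i" for i j
    using proper_graphs_sym[OF d] by (auto simp: relabel_graph_def)
  show "-1 \<le> relabel_graph h S' d i j \<and> relabel_graph h S' d i j \<le> D" if "i \<in> S'" "j \<in> S'" "i \<noteq> j" for i j
    using that proper_graphs_bounds[OF d, of "h i" "h j"] h_inj[OF that] h_mem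
    by (simp add: relabel_graph_def)
  show "relabel_graph h S' d i j = 0" if "\<not> (i \<in> S' \<and> j \<in> S' \<and> i \<noteq> j)" for i j
    using that proper_graphs_zero[OF d, of "h i" "h i"] by (auto simp: relabel_graph_def)
  show "proper_on S' (relabel_graph h S' d)"
    unfolding proper_on_def
  proof (intro ballI impI)
    fix a b c assume abc: "a \<in> S'" "b \<in> S'" "c \<in> S'"
      and le: "a \<noteq> b \<and> a \<noteq> c \<and> b \<noteq> c \<and> relabel_graph h S' d a b \<le> relabel_graph h S' d a c
        \<and> relabel_graph h S' d a c \<le> relabel_graph h S' d b c"
    then have "h a \<noteq> h b" "h a \<noteq> h c" "h b \<noteq> h c"
      using h_inj by auto
    with abc le show "(relabel_graph h S' d a b = -1 \<and> relabel_graph h S' d a c = -1 \<and> relabel_graph h S' d b c = -1)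
        \<or> (relabel_graph h S' d a b < relabel_graph h S' d a c \<and> relabel_graph h S' d a c = relabel_graph h S' d b c)"
      using proper_onD[OF proper_graphs_proper_on[OF d], of "h a" "h b" "h c"] h_mem
      by (simp add: relabel_graph_def)
  qed
qed

lemma inj_on_relabel_graph:
  assumes "h ` S' = S"
  shows "inj_on (relabel_graph h S') (proper_graphs D S)"
proof (rule inj_onI)
  fix d e assume d: "d \<in> proper_graphs D S" and e: "e \<in> proper_graphs D S"
    and eq: "relabel_graph h S' d = relabel_graph h S' e"
  show "d = e"
  proof (rule proper_graphs_eqI[OF d e])
    fix x y assume "x \<in> S" "y \<in> S"
    then obtain i j where "i \<in> S'" "j \<in> S'" "x = h i" "y = h j"
      using assms by blast
    then show "d x y = e x y"
      using fun_cong[OF fun_cong[OF eq, of i], of j] by (simp add: relabel_graph_def)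
  qed
qed

lemma card_proper_graphs_le_bij:
  assumes h: "bij_betw h S' S" and S: "finite S"
  shows "card (proper_graphs D S) \<le> card (proper_graphs D S')"
proof (rule card_inj_on_le)
  show "inj_on (relabel_graph h S') (proper_graphs D S)"
    using h by (intro inj_on_relabel_graph) (simp add: bij_betw_def)
  show "relabel_graph h S' ` proper_graphs D S \<subseteq> proper_graphs D S'"
    using h relabel_graph_in_proper_graphs[of h S' S _ D] by (auto simp: bij_betw_def)
  show "finite (proper_graphs D S')"
    using h S bij_betw_finite finite_proper_graphs by blast
qed

lemma card_proper_graphs_bij:
  assumes "bij_betw h S' S" and "finite S"
  shows "card (proper_graphs D S) = card (proper_graphs D S')"
proof (rule antisym)
  show "card (proper_graphs D S) \<le> card (proper_graphs D S')"
    using assms by (rule card_proper_graphs_le_bij)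
  have "finite S'"
    using assms bij_betw_finite by blast
  with bij_betw_inv_into[OF assms(1)] show "card (proper_graphs D S') \<le> card (proper_graphs D S)"
    by (rule card_proper_graphs_le_bij)
qed

lemma card_proper_graphs_eq_NN:
  assumes "finite S"
  shows "card (proper_graphs (int r - 1) S) = NN r (card S)"
proof -
  obtain h where "bij_betw h {1..card S} S"
    using ex_bij_betw_nat_finite_1[OF assms] by blast
  with assms show ?thesis
    by (simp add: card_proper_graphs_bij[of h] NN_eq_card_proper_graphs)
qed

lemma sum_Pow_card:
  fixes F :: "nat \<Rightarrow> 'a :: comm_semiring_1"
  assumes S: "finite S"
  shows "(\<Sum>A\<in>Pow S. F (card A)) = (\<Sum>a=0..card S. of_nat (card S choose a) * F a)"
proof -
  have "(\<Sum>A\<in>Pow S. F (card A)) = (\<Sum>a=0..card S. \<Sum>A\<in>{A \<in> Pow S. card A = a}. F (card A))"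
    by (rule sum.group[symmetric]) (use S in \<open>auto intro: card_mono\<close>)
  also have "\<dots> = (\<Sum>a=0..card S. of_nat (card S choose a) * F a)"
  proof (rule sum.cong[OF refl])
    fix a
    have "(\<Sum>A\<in>{A \<in> Pow S. card A = a}. F (card A)) = of_nat (card {A. A \<subseteq> S \<and> card A = a}) * F a"
      by simp
    then show "(\<Sum>A\<in>{A \<in> Pow S. card A = a}. F (card A)) = of_nat (card S choose a) * F a"
      by (simp add: n_subsets[OF S])
  qed
  finally show ?thesis .
qed

lemma NN_0: "NN 0 k = 1"
proof -
  define d\<^sub>0 :: weighting where "d\<^sub>0 = (\<lambda>i j. if i \<in> {1..k} \<and> j \<in> {1..k} \<and> i \<noteq> j then -1 else 0)"
  have d\<^sub>0: "d\<^sub>0 \<in> proper_graphs (-1) {1..k}"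
    by (auto simp: proper_graphs_def d\<^sub>0_def proper_on_def)
  have "proper_graphs (-1) {1..k} = {d\<^sub>0}"
  proof (intro equalityI subsetI)
    fix d assume d: "d \<in> proper_graphs (-1) {1..k}"
    have "d = d\<^sub>0"
    proof (rule proper_graphs_eqI[OF d d\<^sub>0])
      fix i j assume "i \<in> {1..k}" "j \<in> {1..k}"
      then show "d i j = d\<^sub>0 i j"
        using proper_graphs_bounds[OF d, of i j] proper_graphs_zero[OF d, of i j]
        by (cases "i = j") (auto simp: d\<^sub>0_def)
    qed
    then show "d \<in> {d\<^sub>0}" by simp
  qed (use d\<^sub>0 in simp)
  then show ?thesis
    by (simp add: NN_eq_card_proper_graphs)
qed

lemma NN_Suc:
  "2 * NN (Suc r) k = 0 ^ k + (\<Sum>a=0..k. (k choose a) * NN r a * NN r (k - a))"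
proof (cases "k = 0")
  case True
  then show ?thesis by (simp add: NN_def)
next
  case False
  let ?S = "{1..k}"
  have "2 * NN (Suc r) k = 2 * card (proper_graphs (int r) ?S)"
    by (simp add: NN_eq_card_proper_graphs)
  also have "\<dots> = (\<Sum>A\<in>Pow ?S. card (proper_graphs (int r - 1) A) * card (proper_graphs (int r - 1) (?S - A)))"
    using card_proper_graphs_split[of ?S 1 "int r"] False by simp
  also have "\<dots> = (\<Sum>A\<in>Pow ?S. NN r (card A) * NN r (k - card A))"
    by (rule sum.cong) (auto simp: card_proper_graphs_eq_NN card_Diff_subset finite_subset)
  also have "\<dots> = (\<Sum>a=0..k. (k choose a) * NN r a * NN r (k - a))"
    using sum_Pow_card[of ?S "\<lambda>a. NN r a * NN r (k - a)"] by (simp add: mult.assoc)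
  finally show ?thesis
    using False by simp
qed

lemma NN_Suc_real:
  "real (NN (Suc r) k) = (0 ^ k + (\<Sum>a=0..k. real (k choose a) * real (NN r a) * real (NN r (k - a)))) / 2"
proof -
  have "real (2 * NN (Suc r) k) = real (0 ^ k + (\<Sum>a=0..k. (k choose a) * NN r a * NN r (k - a)))"
    by (simp only: NN_Suc)
  then show ?thesis
    by simp
qed

lemma egf_mult_nth:
  fixes a b :: "nat \<Rightarrow> 'a :: field_char_0"
  shows "fps_nth (Abs_fps (\<lambda>n. a n / fact n) * Abs_fps (\<lambda>n. b n / fact n)) n
           = (\<Sum>i=0..n. of_nat (n choose i) * a i * b (n - i)) / fact n"
  unfolding fps_mult_nth sum_divide_distrib
  by (rule sum.cong) (auto simp: binomial_fact field_simps)

lemma EGF_0: "EGF 0 = fps_exp 1"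
  by (simp add: fps_eq_iff EGF_def NN_0)

lemma EGF_Suc: "EGF (Suc r) = fps_const (1/2) * (1 + EGF r ^ 2)"
proof (rule fps_ext)
  fix n
  have "fps_nth (fps_const (1/2) * (1 + EGF r ^ 2)) n
      = ((if n = 0 then 1 else 0) + (\<Sum>i=0..n. real (n choose i) * real (NN r i) * real (NN r (n - i))) / fact n) / 2"
    by (simp add: EGF_def power2_eq_square egf_mult_nth)
  also have "\<dots> = fps_nth (EGF (Suc r)) n"
    by (simp add: EGF_def NN_Suc_real add_divide_distrib power_0_left)
  finally show "fps_nth (EGF (Suc r)) n = fps_nth (fps_const (1/2) * (1 + EGF r ^ 2)) n" ..
qed

text \<open>As \<open>0 ^ 0 = 1\<close>, \<open>moment \<nu> N 0\<close> is the total mass of \<open>\<nu>\<close>.\<close>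

definition moment :: "(nat \<Rightarrow> real) \<Rightarrow> nat \<Rightarrow> nat \<Rightarrow> real" where
  "moment \<nu> N k = (\<Sum>m=0..N. \<nu> m * real m ^ k)"

definition self_convolution :: "(nat \<Rightarrow> real) \<Rightarrow> nat \<Rightarrow> nat \<Rightarrow> real" where
  "self_convolution \<nu> N m = (\<Sum>p\<in>{p \<in> {0..N} \<times> {0..N}. fst p + snd p = m}. \<nu> (fst p) * \<nu> (snd p))"

lemma moment_self_convolution:
  "moment (self_convolution \<nu> N) (2 * N) k
     = (\<Sum>a=0..k. real (k choose a) * moment \<nu> N a * moment \<nu> N (k - a))"
proof -
  let ?Q = "{0..N} \<times> {0..N}"
  have "moment (self_convolution \<nu> N) (2 * N) k
      = (\<Sum>m=0..2 * N. \<Sum>p\<in>{p \<in> ?Q. fst p + snd p = m}. \<nu> (fst p) * \<nu> (snd p) * real (fst p + snd p) ^ k)"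
    unfolding moment_def self_convolution_def sum_distrib_right by (rule sum.cong) auto
  also have "\<dots> = (\<Sum>p\<in>?Q. \<nu> (fst p) * \<nu> (snd p) * real (fst p + snd p) ^ k)"
    by (rule sum.group) auto
  also have "\<dots> = (\<Sum>i=0..N. \<Sum>j=0..N. \<nu> i * \<nu> j * (real i + real j) ^ k)"
    by (simp add: sum.cartesian_product case_prod_beta)
  also have "\<dots> = (\<Sum>i=0..N. \<Sum>j=0..N. \<Sum>a=0..k. real (k choose a) * (\<nu> i * real i ^ a) * (\<nu> j * real j ^ (k - a)))"
    by (simp add: binomial_ring atMost_atLeast0 sum_distrib_left mult_ac)
  also have "\<dots> = (\<Sum>a=0..k. \<Sum>i=0..N. \<Sum>j=0..N. real (k choose a) * (\<nu> i * real i ^ a) * (\<nu> j * real j ^ (k - a)))"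
    by (simp only: sum.swap[where A = "{0..N}" and B = "{0..k}"])
  also have "\<dots> = (\<Sum>a=0..k. real (k choose a) * moment \<nu> N a * moment \<nu> N (k - a))"
    by (simp add: moment_def sum_product sum_distrib_left mult_ac)
  finally show ?thesis .
qed

lemma NN_moments:
  "\<exists>\<nu>. (\<forall>m. 0 \<le> \<nu> m) \<and> (\<forall>k. real (NN r k) = moment \<nu> (2 ^ r) k) \<and> \<nu> 0 = 1 - mu r"
proof (induction r)
  case 0
  have "real (NN 0 k) = moment (\<lambda>m. if m = 1 then 1 else 0) (2 ^ 0) k" for k
    by (simp add: moment_def NN_0)
  then show ?case
    by (intro exI[of _ "\<lambda>m. if m = 1 then 1 else 0"]) simp
next
  case (Suc r)
  then obtain \<nu> where nonneg: "\<forall>m. 0 \<le> \<nu> m" and NN_r: "\<forall>k. real (NN r k) = moment \<nu> (2 ^ r) k"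
    and \<nu>_0: "\<nu> 0 = 1 - mu r"
    by blast
  define \<nu>' where "\<nu>' m = ((if m = 0 then 1 else 0) + self_convolution \<nu> (2 ^ r) m) / 2" for m
  have "0 \<le> \<nu>' m" for m
    using nonneg by (simp add: \<nu>'_def self_convolution_def sum_nonneg)
  moreover have "\<nu>' 0 = 1 - mu (Suc r)"
  proof -
    have "{p \<in> {0..2 ^ r} \<times> {0..2 ^ r}. fst p + snd p = 0} = {(0::nat, 0::nat)}"
      by auto
    then have "\<nu>' 0 = (1 + \<nu> 0 ^ 2) / 2"
      by (simp add: \<nu>'_def self_convolution_def power2_eq_square)
    then show ?thesis
      using \<nu>_0 by (simp add: power2_eq_square algebra_simps)
  qed
  moreover have "real (NN (Suc r) k) = moment \<nu>' (2 ^ Suc r) k" for k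
  proof -
    have "moment \<nu>' (2 ^ Suc r) k
        = (moment (\<lambda>m. if m = 0 then 1 else 0) (2 * 2 ^ r) k + moment (self_convolution \<nu> (2 ^ r)) (2 * 2 ^ r) k) / 2"
      by (simp add: moment_def \<nu>'_def sum.distrib add_divide_distrib distrib_right sum_divide_distrib)
    also have "moment (\<lambda>m. if m = 0 then 1 else 0) (2 * 2 ^ r) k = 0 ^ k"
    proof -
      have "moment (\<lambda>m. if m = 0 then 1 else 0) (2 * 2 ^ r) k = (\<Sum>m=0..2 * 2 ^ r. if m = 0 then real m ^ k else 0)"
        unfolding moment_def by (rule sum.cong) auto
      then show ?thesis
        by simp
    qed
    finally show ?thesis
      using NN_r by (simp add: moment_self_convolution NN_Suc_real)
  qed
  ultimately show ?case
    by blast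
qed

theorem mainTheorem14:
  shows "(\<forall>k. NN 0 k = 1)
    \<and> (\<forall>r k. r \<ge> 1 \<longrightarrow> k \<ge> 1 \<longrightarrow>
          real (NN r k) = (1/2) * (\<Sum>a=0..k. real (k choose a) * real (NN (r-1) a) * real (NN (r-1) (k-a))))
    \<and> EGF 0 = fps_exp 1
    \<and> (\<forall>r. r \<ge> 1 \<longrightarrow> EGF r = fps_const (1/2) * (1 + (EGF (r-1))^2))
    \<and> (\<forall>r. \<exists>\<nu> :: nat \<Rightarrow> real.
          (\<forall>m\<in>{0..2^r}. \<nu> m \<ge> 0)
        \<and> (\<Sum>m=0..2^r. \<nu> m) = 1
        \<and> (\<forall>k. real (NN r k) = (\<Sum>m=0..2^r. \<nu> m * real m ^ k))
        \<and> \<nu> 0 = 1 - mu r)"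
proof (intro conjI allI impI)
  fix r k :: nat
  assume "1 \<le> r" "1 \<le> k"
  then show "real (NN r k) = (1/2) * (\<Sum>a=0..k. real (k choose a) * real (NN (r-1) a) * real (NN (r-1) (k-a)))"
    using NN_Suc_real[of "r - 1" k] by simp
next
  fix r :: nat
  assume "1 \<le> r"
  then show "EGF r = fps_const (1/2) * (1 + (EGF (r-1))^2)"
    using EGF_Suc[of "r - 1"] by simp
next
  fix r :: nat
  obtain \<nu> where "\<forall>m. 0 \<le> \<nu> m" and moments: "\<forall>k. real (NN r k) = moment \<nu> (2 ^ r) k"
    and "\<nu> 0 = 1 - mu r"
    using NN_moments by blast
  moreover have "(\<Sum>m=0..2^r. \<nu> m) = 1"
    using moments[rule_format, of 0] by (simp add: moment_def NN_def)
  ultimately show "\<exists>\<nu> :: nat \<Rightarrow> real. (\<forall>m\<in>{0..2^r}. \<nu> m \<ge> 0) \<and> (\<Sum>m=0..2^r. \<nu> m) = 1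
      \<and> (\<forall>k. real (NN r k) = (\<Sum>m=0..2^r. \<nu> m * real m ^ k)) \<and> \<nu> 0 = 1 - mu r"
    unfolding moment_def by blast
qed (simp_all add: NN_0 EGF_0)

end
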